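(* There is an absolute constant $C>0$ such that for all $k\ge 2$, $\gamma\in(0,1]$, $\varepsilon\in(0,1]$ and $n\ge C\,k^{3/2}/(\gamma^2\varepsilon^2)$ the following test is a uniformity tester over $[k]$ with distance parameter $\gamma$: each of the $n$ users applies $\varepsilon$-RAPPOR to its sample $X_j$ and sends $b_j\in\{0,1\}^k$; the curator computes $N_x=\sum_{j}\mathbf 1\{b_{jx}=1\}$, $\lambda=\alpha_R/k+\beta_R$ and $T=\sum_{x\in[k]}\big((N_x-(n-1)\lambda)^2-N_x\big)+k(n-1)\lambda^2$, and outputs ``uniform'' if $T<n(n-1)\alpha_R^2\gamma^2/k$ and ``not uniform'' otherwise.
   Context: $\Delta([k])$ is the set of probability distributions on $[k]=\{1,\dots,k\}$, $u$ the uniform distribution on $[k]$, $d_{TV}(p,q)=\frac12\|p-q\|_1$. Users hold i.i.d. samples $X_1,\dots,X_n$ from an unknown $p\in\Delta([k])$. The $\varepsilon$-RAPPOR mechanism maps $x\in[k]$ to a random vector $b\in\{0,1\}^k$ obtained from the one-hot vector $e_x$ by flipping each coordinate independently with probability $\beta_R=1/(e^{\varepsilon/2}+1)$; $\alpha_R=(e^{\varepsilon/2}-1)/(e^{\varepsilon/2}+1)$. A uniformity tester with distance parameter $\gamma$ must, for every $p$, output ``uniform'' with probability at least $2/3$ if $p=u$ and ``not uniform'' with probability at least $2/3$ if $d_{TV}(p,u)>\gamma$. *)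

theory Defs
  imports "HOL-Probability.Probability"
begin

text \<open>Distributions on [k] = {1..k} are represented as nat pmfs supported in {1..k}.\<close>

definition uniform_k :: "nat \<Rightarrow> nat pmf" where
  "uniform_k k = pmf_of_set {1..k}"

definition dTV :: "nat \<Rightarrow> nat pmf \<Rightarrow> nat pmf \<Rightarrow> real" where
  "dTV k p q = (1/2) * (\<Sum>x\<in>{1..k}. \<bar>pmf p x - pmf q x\<bar>)"

definition beta_R :: "real \<Rightarrow> real" where
  "beta_R \<epsilon> = 1 / (exp (\<epsilon>/2) + 1)"

definition alpha_R :: "real \<Rightarrow> real" where
  "alpha_R \<epsilon> = (exp (\<epsilon>/2) - 1) / (exp (\<epsilon>/2) + 1)"

text \<open>epsilon-RAPPOR: one-hot vector e_x in {0,1}^k (as a function on {1..k}),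
  each coordinate flipped independently with probability beta_R.\<close>
definition rappor :: "real \<Rightarrow> nat \<Rightarrow> nat \<Rightarrow> (nat \<Rightarrow> bool) pmf" where
  "rappor \<epsilon> k x = Pi_pmf {1..k} False
     (\<lambda>y. map_pmf (\<lambda>flip. (y = x) \<noteq> flip) (bernoulli_pmf (beta_R \<epsilon>)))"

text \<open>A uniformity tester: n users each hold an i.i.d. sample from p, apply the
  local mechanism, and the curator applies the decision rule (True = "uniform")
  to the vector of all n messages (users indexed 0..n-1).\<close>
definition is_uniformity_tester ::
  "nat \<Rightarrow> real \<Rightarrow> nat \<Rightarrow> (nat \<Rightarrow> 'b pmf) \<Rightarrow> 'b \<Rightarrow> ((nat \<Rightarrow> 'b) \<Rightarrow> bool) \<Rightarrow> bool" where
  "is_uniformity_tester k \<gamma> n mech dflt dec \<longleftrightarrow>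
     (\<forall>p :: nat pmf. set_pmf p \<subseteq> {1..k} \<longrightarrow>
        (let M = Pi_pmf {..<n} dflt (\<lambda>_. bind_pmf p mech) in
          (p = uniform_k k \<longrightarrow> measure_pmf.prob M {B. dec B} \<ge> 2/3) \<and>
          (dTV k p (uniform_k k) > \<gamma> \<longrightarrow> measure_pmf.prob M {B. \<not> dec B} \<ge> 2/3)))"

definition count_N :: "nat \<Rightarrow> (nat \<Rightarrow> nat \<Rightarrow> bool) \<Rightarrow> nat \<Rightarrow> real" where
  "count_N n B x = real (card {j \<in> {..<n}. B j x})"

definition rappor_stat :: "real \<Rightarrow> nat \<Rightarrow> nat \<Rightarrow> (nat \<Rightarrow> nat \<Rightarrow> bool) \<Rightarrow> real" where
  "rappor_stat \<epsilon> k n B =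
     (let lam = alpha_R \<epsilon> / real k + beta_R \<epsilon> in
       (\<Sum>x\<in>{1..k}. (count_N n B x - (real n - 1) * lam)\<^sup>2 - count_N n B x)
       + real k * (real n - 1) * lam\<^sup>2)"

definition rappor_test :: "real \<Rightarrow> nat \<Rightarrow> nat \<Rightarrow> real \<Rightarrow> (nat \<Rightarrow> nat \<Rightarrow> bool) \<Rightarrow> bool" where
  "rappor_test \<epsilon> k n \<gamma> B \<longleftrightarrow>
     rappor_stat \<epsilon> k n B < real n * (real n - 1) * (alpha_R \<epsilon>)\<^sup>2 * \<gamma>\<^sup>2 / real k"

end

theory Submission
  imports Defs
begin

text \<open>
  Write a report as b = m + W, where m_x = \<beta> + \<alpha> p_x is its mean and W is centred.
  Expanding the statistic coordinatewise gives T = U + L + n(n-1) |\<mu>|^2 with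
  \<mu>_x = \<alpha> (p_x - 1/k), where U = sum_x sum_{i \<noteq> j} W_ix W_jx is a degenerate
  U-statistic and L = 2(n-1) sum_i <\<mu>, W_i> is a sum of independent centred terms.
  Independence across users gives E U^2 = 2n(n-1) sum_{x,y} Cov(b_x, b_y)^2 \<le> 4n(n-1)k
  and E L^2 \<le> 5n(n-1)^2 |\<mu>|^2. Under uniformity \<mu> = 0, and Chebyshev's inequality
  bounds the probability of rejecting. If d_TV(p, u) > \<gamma>, Cauchy-Schwarz gives
  |\<mu>|^2 \<ge> 4 \<alpha>^2 \<gamma>^2 / k, so E T is at least four times the threshold and
  Chebyshev's inequality bounds the probability of accepting. Since \<alpha> \<ge> \<epsilon>/6,
  n \<ge> 1440 k^(3/2) / (\<gamma> \<epsilon>)^2 suffices.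
\<close>

section \<open>Expectations under product distributions\<close>

lemma finite_set_Pi_pmf:
  assumes "finite A" "\<And>i. i \<in> A \<Longrightarrow> finite (set_pmf (p i))"
  shows "finite (set_pmf (Pi_pmf A d p))"
  using assms by (subst set_Pi_pmf) auto

lemma expectation_Pi_pmf_prod:
  fixes f :: "'a \<Rightarrow> 'b \<Rightarrow> real"
  assumes A: "finite A" and S: "S \<subseteq> A" and fin: "\<And>i. i \<in> A \<Longrightarrow> finite (set_pmf (p i))"
  shows "measure_pmf.expectation (Pi_pmf A d p) (\<lambda>B. \<Prod>i\<in>S. f i (B i))
         = (\<Prod>i\<in>S. measure_pmf.expectation (p i) (f i))"
proof -
  have "prob_space.indep_vars (measure_pmf (Pi_pmf A d p)) (\<lambda>_. borel) (\<lambda>i B. f i (B i)) S"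
    by (rule prob_space.indep_vars_compose2[OF measure_pmf.prob_space_axioms
          prob_space.indep_vars_subset[OF measure_pmf.prob_space_axioms indep_vars_Pi_pmf[OF A] S]])
      auto
  moreover have "integrable (measure_pmf (Pi_pmf A d p)) g" for g :: "_ \<Rightarrow> real"
    by (rule integrable_measure_pmf_finite, rule finite_set_Pi_pmf[OF A fin])
  ultimately have "measure_pmf.expectation (Pi_pmf A d p) (\<lambda>B. \<Prod>i\<in>S. f i (B i))
      = (\<Prod>i\<in>S. measure_pmf.expectation (Pi_pmf A d p) (\<lambda>B. f i (B i)))"
    using finite_subset[OF S A]
    by (intro prob_space.indep_vars_lebesgue_integral[OF measure_pmf.prob_space_axioms]) auto
  also have "\<dots> = (\<Prod>i\<in>S. measure_pmf.expectation (p i) (f i))"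
  proof (intro prod.cong refl)
    fix i assume "i \<in> S"
    then have "map_pmf (\<lambda>B. B i) (Pi_pmf A d p) = p i"
      using S A by (auto simp: Pi_pmf_component)
    then show "measure_pmf.expectation (Pi_pmf A d p) (\<lambda>B. f i (B i))
        = measure_pmf.expectation (p i) (f i)"
      by (metis integral_map_pmf)
  qed
  finally show ?thesis .
qed

lemma expectation_pair_pmf_prod:
  fixes f :: "'a \<Rightarrow> real" and g :: "'b \<Rightarrow> real"
  assumes "finite (set_pmf P)" "finite (set_pmf R)"
  shows "measure_pmf.expectation (pair_pmf P R) (\<lambda>z. f (fst z) * g (snd z)) =
         measure_pmf.expectation P f * measure_pmf.expectation R g"
proof -
  have "measure_pmf.expectation (pair_pmf P R) (\<lambda>z. f (fst z) * g (snd z)) =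
        (\<Sum>(y,h)\<in>set_pmf P \<times> set_pmf R. (f y * pmf P y) * (g h * pmf R h))"
    using assms by (subst integral_measure_pmf_real) (auto simp: pmf_pair intro!: sum.cong)
  also have "\<dots> = (\<Sum>y\<in>set_pmf P. f y * pmf P y) * (\<Sum>h\<in>set_pmf R. g h * pmf R h)"
    by (simp add: sum.cartesian_product sum_product)
  finally show ?thesis
    using assms by (simp add: integral_measure_pmf_real)
qed

lemma expectation_Pi_pmf_centered_factor:
  fixes f :: "'b \<Rightarrow> real" and G :: "('a \<Rightarrow> 'b) \<Rightarrow> real"
  assumes A: "finite A" and fin: "\<And>i. i \<in> A \<Longrightarrow> finite (set_pmf (p i))" and l: "l \<in> A"
    and f0: "measure_pmf.expectation (p l) f = 0"
    and G: "\<And>B y. G (B(l := y)) = G B"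
  shows "measure_pmf.expectation (Pi_pmf A d p) (\<lambda>B. f (B l) * G B) = 0"
proof -
  have "Pi_pmf A d p = map_pmf (\<lambda>(y,h). h(l:=y)) (pair_pmf (p l) (Pi_pmf (A - {l}) d p))"
    using A l Pi_pmf_insert[of "A - {l}" l d p] by (simp add: insert_absorb)
  hence "measure_pmf.expectation (Pi_pmf A d p) (\<lambda>B. f (B l) * G B) =
     measure_pmf.expectation (pair_pmf (p l) (Pi_pmf (A - {l}) d p)) (\<lambda>z. f (fst z) * G (snd z))"
    by (simp add: case_prod_beta G)
  also have "\<dots> = 0"
    using fin l A finite_set_Pi_pmf[of "A - {l}" p d] f0 by (subst expectation_pair_pmf_prod) auto
  finally show ?thesis .
qed

lemma expectation_Pi_pmf_centered_pair:
  fixes f g :: "'b \<Rightarrow> real"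
  assumes A: "finite A" and fin: "finite (set_pmf Q)" and ij: "i \<in> A" "j \<in> A"
    and f0: "measure_pmf.expectation Q f = 0"
  shows "measure_pmf.expectation (Pi_pmf A d (\<lambda>_. Q)) (\<lambda>B. f (B i) * g (B j)) =
         (if i = j then measure_pmf.expectation Q (\<lambda>b. f b * g b) else 0)"
proof (cases "i = j")
  case True
  then show ?thesis
    using expectation_Pi_pmf_prod[of A "{i}" "\<lambda>_. Q" d "\<lambda>_ b. f b * g b"] A fin ij by simp
next
  case False
  then show ?thesis
    using A fin ij f0
    by (simp add: expectation_Pi_pmf_centered_factor[where G = "\<lambda>B. g (B j)"])
qed

lemma expectation_Pi_pmf_centered_quadruple:
  fixes f g :: "'b \<Rightarrow> real"
  assumes A: "finite A" and fin: "finite (set_pmf Q)"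
    and idx: "i \<in> A" "j \<in> A" "i' \<in> A" "j' \<in> A" "i \<noteq> j" "i' \<noteq> j'"
    and f0: "measure_pmf.expectation Q f = 0"
  shows "measure_pmf.expectation (Pi_pmf A d (\<lambda>_. Q)) (\<lambda>B. f (B i) * f (B j) * (g (B i') * g (B j'))) =
         (if {i', j'} = {i, j} then (measure_pmf.expectation Q (\<lambda>b. f b * g b))\<^sup>2 else 0)"
proof -
  consider "i \<notin> {i', j'}" | "j \<notin> {i', j'}" | "{i', j'} = {i, j}"
    using idx by blast
  then show ?thesis
  proof cases
    case 1
    then have "measure_pmf.expectation (Pi_pmf A d (\<lambda>_. Q))
        (\<lambda>B. f (B i) * (f (B j) * (g (B i') * g (B j')))) = 0"
      using A fin idx f0
      by (intro expectation_Pi_pmf_centered_factor) auto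
    with 1 idx show ?thesis by (auto simp: mult.assoc doubleton_eq_iff)
  next
    case 2
    then have "measure_pmf.expectation (Pi_pmf A d (\<lambda>_. Q))
        (\<lambda>B. f (B j) * (f (B i) * (g (B i') * g (B j')))) = 0"
      using A fin idx f0
      by (intro expectation_Pi_pmf_centered_factor) auto
    with 2 idx show ?thesis by (auto simp: mult_ac doubleton_eq_iff)
  next
    case 3
    then have "(\<lambda>B. f (B i) * f (B j) * (g (B i') * g (B j'))) = (\<lambda>B. \<Prod>l\<in>{i, j}. f (B l) * g (B l))"
      using idx by (auto simp: doubleton_eq_iff mult_ac)
    with 3 show ?thesis
      using expectation_Pi_pmf_prod[of A "{i, j}" "\<lambda>_. Q" d "\<lambda>_ b. f b * g b"] A fin idx
      by (simp add: power2_eq_square)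
  qed
qed

definition distinct_pairs :: "nat \<Rightarrow> (nat \<times> nat) set" where
  "distinct_pairs n = {(i, j). i < n \<and> j < n \<and> i \<noteq> j}"

lemma distinct_pairs_Sigma: "distinct_pairs n = (SIGMA i:{..<n}. {..<n} - {i})"
  by (auto simp: distinct_pairs_def)

lemma finite_distinct_pairs [simp]: "finite (distinct_pairs n)"
  by (simp add: distinct_pairs_Sigma)

lemma card_distinct_pairs: "card (distinct_pairs n) = n * (n - 1)"
  by (simp add: distinct_pairs_Sigma card_SigmaI card_Diff_singleton)

lemma sum_distinct_pairs_prod:
  fixes f :: "nat \<Rightarrow> real"
  shows "(\<Sum>(i, j)\<in>distinct_pairs n. f i * f j) = (\<Sum>i<n. f i)\<^sup>2 - (\<Sum>i<n. (f i)\<^sup>2)"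
proof -
  have "(\<Sum>(i, j)\<in>distinct_pairs n. f i * f j) = (\<Sum>i<n. f i * ((\<Sum>j<n. f j) - f i))"
    by (simp add: distinct_pairs_Sigma sum.Sigma[symmetric] sum_distrib_left[symmetric] sum_diff1)
  also have "\<dots> = (\<Sum>i<n. f i)\<^sup>2 - (\<Sum>i<n. (f i)\<^sup>2)"
    by (simp add: right_diff_distrib sum_subtractf power2_eq_square sum_distrib_right)
  finally show ?thesis .
qed

lemma sum_distinct_pairs_same_pair:
  assumes "(i, j) \<in> distinct_pairs n"
  shows "(\<Sum>(i', j')\<in>distinct_pairs n. if {i', j'} = {i, j} then c else 0) = 2 * (c :: real)"
proof -
  have "{z \<in> distinct_pairs n. {fst z, snd z} = {i, j}} = {(i, j), (j, i)}"
    using assms by (auto simp: distinct_pairs_def doubleton_eq_iff)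
  moreover have "card {(i, j), (j, i)} = 2"
    using assms by (auto simp: distinct_pairs_def)
  ultimately show ?thesis
    by (simp add: case_prod_unfold sum.If_cases Int_def)
qed

lemma expectation_sum_iid_centered_sq:
  fixes f :: "'b \<Rightarrow> real"
  assumes fin: "finite (set_pmf Q)" and f0: "measure_pmf.expectation Q f = 0"
  shows "measure_pmf.expectation (Pi_pmf {..<n} d (\<lambda>_. Q)) (\<lambda>B. (\<Sum>i<n. f (B i))\<^sup>2) =
         real n * measure_pmf.expectation Q (\<lambda>b. (f b)\<^sup>2)"
proof -
  have "measure_pmf.expectation (Pi_pmf {..<n} d (\<lambda>_. Q)) (\<lambda>B. (\<Sum>i<n. f (B i))\<^sup>2) =
        (\<Sum>i<n. \<Sum>j<n. measure_pmf.expectation (Pi_pmf {..<n} d (\<lambda>_. Q)) (\<lambda>B. f (B i) * f (B j)))"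
    using fin finite_set_Pi_pmf[of "{..<n}" "\<lambda>_. Q" d]
    by (simp add: power2_eq_square sum_product integrable_measure_pmf_finite)
  also have "\<dots> = real n * measure_pmf.expectation Q (\<lambda>b. (f b)\<^sup>2)"
    using fin f0 by (simp add: expectation_Pi_pmf_centered_pair power2_eq_square)
  finally show ?thesis .
qed

lemma expectation_distinct_pairs_iid_centered:
  fixes f g :: "'b \<Rightarrow> real"
  assumes fin: "finite (set_pmf Q)"
    and f0: "measure_pmf.expectation Q f = 0"
  shows "measure_pmf.expectation (Pi_pmf {..<n} d (\<lambda>_. Q))
           (\<lambda>B. (\<Sum>(i, j)\<in>distinct_pairs n. f (B i) * f (B j)) *
                (\<Sum>(i, j)\<in>distinct_pairs n. g (B i) * g (B j))) =
         2 * real n * (real n - 1) * (measure_pmf.expectation Q (\<lambda>b. f b * g b))\<^sup>2"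
proof -
  let ?E = "measure_pmf.expectation (Pi_pmf {..<n} d (\<lambda>_. Q))"
  let ?c = "(measure_pmf.expectation Q (\<lambda>b. f b * g b))\<^sup>2"
  have "?E (\<lambda>B. (\<Sum>(i, j)\<in>distinct_pairs n. f (B i) * f (B j)) *
                 (\<Sum>(i, j)\<in>distinct_pairs n. g (B i) * g (B j))) =
        (\<Sum>(i, j)\<in>distinct_pairs n. \<Sum>(i', j')\<in>distinct_pairs n.
           ?E (\<lambda>B. f (B i) * f (B j) * (g (B i') * g (B j'))))"
    using fin finite_set_Pi_pmf[of "{..<n}" "\<lambda>_. Q" d]
    by (simp add: sum_product case_prod_unfold integrable_measure_pmf_finite)
  also have "\<dots> = (\<Sum>(i, j)\<in>distinct_pairs n. \<Sum>(i', j')\<in>distinct_pairs n. if {i', j'} = {i, j} then ?c else 0)"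
    using fin f0 unfolding distinct_pairs_def
    by (auto intro!: sum.cong simp: expectation_Pi_pmf_centered_quadruple)
  also have "\<dots> = (\<Sum>z\<in>distinct_pairs n. 2 * ?c)"
    by (intro sum.cong refl) (auto intro: sum_distinct_pairs_same_pair)
  also have "\<dots> = 2 * real n * (real n - 1) * ?c"
    by (cases n) (simp_all add: card_distinct_pairs algebra_simps)
  finally show ?thesis .
qed

text \<open>
  Per-coordinate form of the decomposition of the statistic: the \<open>w i + q\<close> are 0/1 indicators
  with mean \<open>q\<close>, and \<open>l\<close> is the centring constant.
\<close>

lemma sum_distinct_pairs_indicator_identity:
  fixes w :: "nat \<Rightarrow> real" and q l :: real
  assumes idem: "\<And>i. i < n \<Longrightarrow> (w i + q)\<^sup>2 = w i + q"
  defines "N \<equiv> (\<Sum>i<n. w i + q)"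
  shows "(N - (real n - 1) * l)\<^sup>2 - N + (real n - 1) * l\<^sup>2 =
         (\<Sum>(i, j)\<in>distinct_pairs n. w i * w j) + 2 * (real n - 1) * (q - l) * (\<Sum>i<n. w i)
         + real n * (real n - 1) * (q - l)\<^sup>2"
proof -
  have N: "N = (\<Sum>i<n. w i) + real n * q"
    by (simp add: N_def sum.distrib)
  have "N = (\<Sum>i<n. (w i + q)\<^sup>2)"
    using idem by (simp add: N_def)
  also have "\<dots> = (\<Sum>i<n. (w i)\<^sup>2) + 2 * q * (\<Sum>i<n. w i) + real n * q\<^sup>2"
    by (simp add: power2_sum sum.distrib sum_distrib_left mult_ac)
  finally have "(\<Sum>i<n. (w i)\<^sup>2) = N - 2 * q * (\<Sum>i<n. w i) - real n * q\<^sup>2"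
    by simp
  then show ?thesis
    unfolding sum_distinct_pairs_prod N by (simp add: power2_eq_square algebra_simps)
qed

lemma sum_of_bool_eq_mult_delta:
  fixes f :: "'a \<Rightarrow> 'b::semiring_1"
  assumes "finite A" "x \<in> A"
  shows "(\<Sum>z\<in>A. of_bool (x = z) * f z) = f x"
proof -
  have "(\<Sum>z\<in>A. of_bool (x = z) * f z) = (\<Sum>z\<in>A. if x = z then f z else 0)"
    by (intro sum.cong) auto
  with assms show ?thesis
    by simp
qed

section \<open>The RAPPOR mechanism\<close>

lemma beta_R_pos: "0 < beta_R e"
  by (simp add: beta_R_def add_pos_pos)

lemma beta_R_less_1: "beta_R e < 1"
  by (simp add: beta_R_def add_pos_pos)

lemma one_minus_beta_R: "1 - beta_R e = beta_R e + alpha_R e"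
proof -
  have "exp (e / 2) + 1 > 0"
    by (simp add: add_pos_pos)
  then show ?thesis
    by (simp add: alpha_R_def beta_R_def field_simps)
qed

lemma alpha_R_pos: "0 < e \<Longrightarrow> 0 < alpha_R e"
  by (simp add: alpha_R_def add_pos_pos)

lemma alpha_R_le_1: "alpha_R e \<le> 1"
  by (simp add: alpha_R_def add_pos_pos)

lemma alpha_R_lower_bound:
  assumes "0 < e" "e \<le> 1"
  shows "e / 6 \<le> alpha_R e"
proof -
  define E where "E = exp (e / 2)"
  have E1: "1 + e / 2 \<le> E"
    unfolding E_def by (rule exp_ge_add_one_self)
  have "E \<le> exp (1 / 2)"
    unfolding E_def using assms by simp
  then have "E \<le> 2"
    using exp_half_le2 by linarith
  then have "(E - 1) / 3 \<le> (E - 1) / (E + 1)"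
    using E1 assms by (intro divide_left_mono) auto
  moreover have "e / 6 \<le> (E - 1) / 3"
    using E1 by simp
  ultimately show ?thesis
    unfolding alpha_R_def E_def[symmetric] by linarith
qed

lemma expectation_rappor_prod:
  assumes "S \<subseteq> {1..k}"
  shows "measure_pmf.expectation (rappor e k z) (\<lambda>b. \<Prod>l\<in>S. of_bool (b l)) =
         (\<Prod>l\<in>S. beta_R e + alpha_R e * of_bool (l = z))"
proof -
  have "measure_pmf.expectation (rappor e k z) (\<lambda>b. \<Prod>l\<in>S. of_bool (b l) :: real) =
     (\<Prod>l\<in>S. measure_pmf.expectation (map_pmf (\<lambda>flip. (l = z) \<noteq> flip) (bernoulli_pmf (beta_R e)))
        of_bool)"
    unfolding rappor_def by (rule expectation_Pi_pmf_prod) (use assms in auto)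
  also have "\<dots> = (\<Prod>l\<in>S. beta_R e + alpha_R e * of_bool (l = z))"
    using beta_R_pos[of e] beta_R_less_1[of e] one_minus_beta_R[of e]
    by (intro prod.cong refl) (auto simp: integral_bernoulli_pmf)
  finally show ?thesis .
qed

section \<open>Moments of the test statistic\<close>

locale rappor_model =
  fixes k :: nat and e :: real and p :: "nat pmf"
  assumes e_pos: "0 < e" and set_pmf_p: "set_pmf p \<subseteq> {1..k}"
begin

abbreviation "\<alpha> \<equiv> alpha_R e"
abbreviation "\<beta> \<equiv> beta_R e"

definition message :: "(nat \<Rightarrow> bool) pmf" where
  "message = p \<bind> rappor e k"

lemma finite_set_message [simp]: "finite (set_pmf message)"
proof -
  have "finite (set_pmf p)"
    using set_pmf_p finite_subset by blast
  moreover have "finite (set_pmf (rappor e k z))" for z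
    unfolding rappor_def by (rule finite_set_Pi_pmf) auto
  ultimately show ?thesis
    by (simp add: message_def)
qed

lemma integrable_message [simp]: "integrable (measure_pmf message) (f :: _ \<Rightarrow> real)"
  by (rule integrable_measure_pmf_finite) simp

lemma expectation_message:
  fixes f :: "(nat \<Rightarrow> bool) \<Rightarrow> real"
  shows "measure_pmf.expectation message f =
         (\<Sum>z\<in>{1..k}. pmf p z * measure_pmf.expectation (rappor e k z) f)"
  unfolding message_def using set_pmf_p
  by (subst pmf_expectation_bind[of "{1..k}"]) (auto simp: rappor_def intro: finite_set_Pi_pmf)

definition mean :: "nat \<Rightarrow> real" where
  "mean x = \<beta> + \<alpha> * pmf p x"

lemma expectation_message_coord:
  assumes "x \<in> {1..k}"
  shows "measure_pmf.expectation message (\<lambda>b. of_bool (b x)) = mean x"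
proof -
  have "measure_pmf.expectation message (\<lambda>b. of_bool (b x)) =
        (\<Sum>z\<in>{1..k}. pmf p z * (\<beta> + \<alpha> * of_bool (x = z)))"
    using assms expectation_rappor_prod[of "{x}" k e] by (simp add: expectation_message)
  also have "\<dots> = \<beta> * (\<Sum>z\<in>{1..k}. pmf p z) + \<alpha> * (\<Sum>z\<in>{1..k}. of_bool (x = z) * pmf p z)"
    by (simp only: ring_distribs sum.distrib sum_distrib_left mult_ac)
  also have "\<dots> = \<beta> * (\<Sum>z\<in>{1..k}. pmf p z) + \<alpha> * pmf p x"
    using assms by (simp add: sum_of_bool_eq_mult_delta)
  finally show ?thesis
    using set_pmf_p by (simp add: sum_pmf_eq_1 mean_def)
qed

lemma expectation_message_coord_pair:
  assumes "x \<in> {1..k}" "y \<in> {1..k}" "x \<noteq> y"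
  shows "measure_pmf.expectation message (\<lambda>b. of_bool (b x) * of_bool (b y)) =
         \<beta>\<^sup>2 + \<alpha> * \<beta> * (pmf p x + pmf p y)"
proof -
  have "measure_pmf.expectation (rappor e k z) (\<lambda>b. of_bool (b x) * of_bool (b y)) =
        \<beta>\<^sup>2 + \<alpha> * \<beta> * (of_bool (x = z) + of_bool (y = z))" for z
    using assms expectation_rappor_prod[of "{x, y}" k e z]
    by (auto simp: power2_eq_square algebra_simps)
  then have "measure_pmf.expectation message (\<lambda>b. of_bool (b x) * of_bool (b y)) =
        (\<Sum>z\<in>{1..k}. \<beta>\<^sup>2 * pmf p z + \<alpha> * \<beta> * (of_bool (x = z) * pmf p z + of_bool (y = z) * pmf p z))"
    by (simp add: expectation_message algebra_simps)
  also have "\<dots> = \<beta>\<^sup>2 * (\<Sum>z\<in>{1..k}. pmf p z) + \<alpha> * \<beta> * (pmf p x + pmf p y)"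
    using assms by (simp add: sum.distrib sum_distrib_left[symmetric] sum_of_bool_eq_mult_delta)
  finally show ?thesis
    using set_pmf_p by (simp add: sum_pmf_eq_1)
qed

lemma mean_bounds: "0 \<le> mean x" "mean x \<le> 1"
proof -
  have "0 \<le> \<alpha> * pmf p x" "\<alpha> * pmf p x \<le> \<alpha>"
    using alpha_R_pos[OF e_pos] pmf_le_1[of p x] by (auto simp: mult_left_le)
  then show "0 \<le> mean x" "mean x \<le> 1"
    using one_minus_beta_R[of e] beta_R_pos[of e] by (auto simp: mean_def)
qed

definition centered :: "(nat \<Rightarrow> bool) \<Rightarrow> nat \<Rightarrow> real" where
  "centered b x = of_bool (b x) - mean x"

lemma expectation_centered: "x \<in> {1..k} \<Longrightarrow> measure_pmf.expectation message (\<lambda>b. centered b x) = 0"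
  by (simp add: centered_def expectation_message_coord)

definition cov :: "nat \<Rightarrow> nat \<Rightarrow> real" where
  "cov x y = measure_pmf.expectation message (\<lambda>b. centered b x * centered b y)"

lemma cov_eq:
  assumes "x \<in> {1..k}" "y \<in> {1..k}"
  shows "cov x y = of_bool (x = y) * (mean x * (1 - mean x) + \<alpha>\<^sup>2 * (pmf p x)\<^sup>2) - \<alpha>\<^sup>2 * pmf p x * pmf p y"
proof -
  have "cov x y = measure_pmf.expectation message (\<lambda>b. of_bool (b x) * of_bool (b y))
                  - mean x * mean y"
    using assms
    by (simp add: cov_def centered_def algebra_simps expectation_message_coord)
  then show ?thesis
    using assms expectation_message_coord[of x] expectation_message_coord_pair[of x y]
    by (cases "x = y") (auto simp: mean_def power2_eq_square algebra_simps simp flip: of_bool_conj)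
qed

lemma cov_sq_le:
  assumes "x \<in> {1..k}" "y \<in> {1..k}"
  shows "(cov x y)\<^sup>2 \<le> of_bool (x = y) + pmf p y"
proof (cases "x = y")
  case True
  then have "cov x y = mean x * (1 - mean x)"
    using cov_eq[OF assms] by (simp add: power2_eq_square)
  moreover have "0 \<le> mean x * (1 - mean x)" "mean x * (1 - mean x) \<le> 1"
    using mean_bounds[of x] by (auto simp: mult_le_one)
  ultimately show ?thesis
    using True by (simp add: power_le_one add_increasing2)
next
  case False
  have "\<alpha>\<^sup>2 * pmf p x \<le> 1"
    using alpha_R_pos[OF e_pos] alpha_R_le_1[of e] pmf_le_1[of p x] by (simp add: mult_le_one power_le_one)
  then have "\<alpha>\<^sup>2 * pmf p x * pmf p y \<le> pmf p y"
    by (simp add: mult_left_le_one_le)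
  then have "(\<alpha>\<^sup>2 * pmf p x * pmf p y)\<^sup>2 \<le> (pmf p y)\<^sup>2"
    by (simp add: power_mono)
  also have "\<dots> \<le> pmf p y"
    by (simp add: power2_eq_square mult_left_le_one_le pmf_le_1)
  finally show ?thesis
    using False cov_eq[OF assms] by simp
qed

lemma sum_cov_sq_le: "(\<Sum>x\<in>{1..k}. \<Sum>y\<in>{1..k}. (cov x y)\<^sup>2) \<le> 2 * real k"
proof -
  have "(\<Sum>x\<in>{1..k}. \<Sum>y\<in>{1..k}. (cov x y)\<^sup>2)
        \<le> (\<Sum>x\<in>{1..k}. \<Sum>y\<in>{1..k}. of_bool (x = y) + pmf p y)"
    by (intro sum_mono cov_sq_le) auto
  also have "\<dots> = (\<Sum>x\<in>{1..k}. 1 + (\<Sum>y\<in>{1..k}. pmf p y))"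
    by (intro sum.cong refl) (simp add: sum.distrib)
  also have "\<dots> = 2 * real k"
    using set_pmf_p by (simp add: sum_pmf_eq_1)
  finally show ?thesis .
qed

lemma expectation_weighted_centered_sq:
  "measure_pmf.expectation message (\<lambda>b. (\<Sum>x\<in>{1..k}. w x * centered b x)\<^sup>2)
     \<le> 5/4 * (\<Sum>x\<in>{1..k}. (w x)\<^sup>2)"
proof -
  define d where "d x = mean x * (1 - mean x) + \<alpha>\<^sup>2 * (pmf p x)\<^sup>2" for x
  have "measure_pmf.expectation message (\<lambda>b. (\<Sum>x\<in>{1..k}. w x * centered b x)\<^sup>2) =
        (\<Sum>x\<in>{1..k}. \<Sum>y\<in>{1..k}. w x * w y * cov x y)"
    by (simp add: power2_eq_square sum_product cov_def mult_ac)
  also have "\<dots> = (\<Sum>x\<in>{1..k}. \<Sum>y\<in>{1..k}.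
                    of_bool (x = y) * (w x * w y * d x) - \<alpha>\<^sup>2 * ((w x * pmf p x) * (w y * pmf p y)))"
    by (intro sum.cong refl) (simp add: cov_eq d_def algebra_simps)
  also have "\<dots> = (\<Sum>x\<in>{1..k}. (w x)\<^sup>2 * d x) - \<alpha>\<^sup>2 * (\<Sum>x\<in>{1..k}. w x * pmf p x)\<^sup>2"
    by (simp add: sum_subtractf sum_of_bool_eq_mult_delta sum_distrib_left[symmetric]
        power2_eq_square sum_product)
  \<comment> \<open>the rank-one part \<open>-\<alpha>\<^sup>2 p p\<^sup>T\<close> of the covariance is negative semidefinite\<close>
  also have "\<dots> \<le> (\<Sum>x\<in>{1..k}. (w x)\<^sup>2 * d x)"
    by simp
  also have "\<dots> \<le> (\<Sum>x\<in>{1..k}. 5/4 * (w x)\<^sup>2)"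
  proof (intro sum_mono)
    fix x
    have "mean x * (1 - mean x) \<le> 1/4"
      using zero_le_power2[of "mean x - 1/2"] by (simp add: power2_eq_square algebra_simps)
    moreover have "\<alpha>\<^sup>2 * (pmf p x)\<^sup>2 \<le> 1"
      using alpha_R_pos[OF e_pos] alpha_R_le_1[of e] pmf_le_1[of p x]
      by (simp add: power_le_one mult_le_one)
    ultimately have "d x \<le> 5/4"
      by (simp add: d_def)
    then show "(w x)\<^sup>2 * d x \<le> 5/4 * (w x)\<^sup>2"
      using mult_left_mono[of "d x" "5/4" "(w x)\<^sup>2"] by (simp add: mult.commute)
  qed
  finally show ?thesis
    by (simp add: sum_distrib_left)
qed

definition users :: "nat \<Rightarrow> (nat \<Rightarrow> nat \<Rightarrow> bool) pmf" where
  "users n = Pi_pmf {..<n} (\<lambda>_. False) (\<lambda>_. message)"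

lemma integrable_users [simp]: "integrable (measure_pmf (users n)) (f :: _ \<Rightarrow> real)"
  unfolding users_def by (intro integrable_measure_pmf_finite finite_set_Pi_pmf) auto

text \<open>The mean of a report coordinate minus the centring constant \<alpha>/k + \<beta> of the statistic.\<close>

definition mean_offset :: "nat \<Rightarrow> real" where
  "mean_offset x = \<alpha> * (pmf p x - 1 / real k)"

definition pair_part :: "nat \<Rightarrow> (nat \<Rightarrow> nat \<Rightarrow> bool) \<Rightarrow> real" where
  "pair_part n B = (\<Sum>x\<in>{1..k}. \<Sum>(i, j)\<in>distinct_pairs n. centered (B i) x * centered (B j) x)"

definition linear_part :: "nat \<Rightarrow> (nat \<Rightarrow> nat \<Rightarrow> bool) \<Rightarrow> real" where
  "linear_part n B = 2 * (real n - 1) * (\<Sum>i<n. \<Sum>x\<in>{1..k}. mean_offset x * centered (B i) x)"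

lemma rappor_stat_decomposition:
  "rappor_stat e k n B = pair_part n B + linear_part n B + real n * (real n - 1) * (\<Sum>x\<in>{1..k}. (mean_offset x)\<^sup>2)"
proof -
  define l where "l = \<alpha> / real k + \<beta>"
  have count: "count_N n B x = (\<Sum>i<n. centered (B i) x + mean x)" for x
    by (simp add: count_N_def centered_def Int_def)
  have "(count_N n B x - (real n - 1) * l)\<^sup>2 - count_N n B x + (real n - 1) * l\<^sup>2 =
        (\<Sum>(i, j)\<in>distinct_pairs n. centered (B i) x * centered (B j) x)
        + 2 * (real n - 1) * mean_offset x * (\<Sum>i<n. centered (B i) x) + real n * (real n - 1) * (mean_offset x)\<^sup>2" for x
  proof -
    have "mean x - l = mean_offset x"
      by (simp add: mean_def mean_offset_def l_def algebra_simps)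
    then show ?thesis
      unfolding count by (subst sum_distinct_pairs_indicator_identity) (simp_all add: centered_def)
  qed
  moreover have "rappor_stat e k n B =
      (\<Sum>x\<in>{1..k}. (count_N n B x - (real n - 1) * l)\<^sup>2 - count_N n B x + (real n - 1) * l\<^sup>2)"
    by (simp add: rappor_stat_def Let_def l_def sum.distrib mult.assoc)
  ultimately have "rappor_stat e k n B = (\<Sum>x\<in>{1..k}.
        (\<Sum>(i, j)\<in>distinct_pairs n. centered (B i) x * centered (B j) x)
        + 2 * (real n - 1) * mean_offset x * (\<Sum>i<n. centered (B i) x)
        + real n * (real n - 1) * (mean_offset x)\<^sup>2)"
    by simp
  moreover have "(\<Sum>x\<in>{1..k}. 2 * (real n - 1) * mean_offset x * (\<Sum>i<n. centered (B i) x)) =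
                 linear_part n B"
    unfolding linear_part_def by (simp add: sum_distrib_left mult.assoc) (rule sum.swap)
  ultimately show ?thesis
    by (simp add: pair_part_def sum.distrib sum_distrib_left)
qed

lemma expectation_pair_part_sq:
  "measure_pmf.expectation (users n) (\<lambda>B. (pair_part n B)\<^sup>2) \<le> 4 * real n * (real n - 1) * real k"
proof -
  have "measure_pmf.expectation (users n) (\<lambda>B. (pair_part n B)\<^sup>2) =
        (\<Sum>x\<in>{1..k}. \<Sum>y\<in>{1..k}. measure_pmf.expectation (users n)
          (\<lambda>B. (\<Sum>(i, j)\<in>distinct_pairs n. centered (B i) x * centered (B j) x) *
               (\<Sum>(i, j)\<in>distinct_pairs n. centered (B i) y * centered (B j) y)))"
    by (simp add: pair_part_def power2_eq_square sum_product)
  also have "\<dots> = (\<Sum>x\<in>{1..k}. \<Sum>y\<in>{1..k}. 2 * real n * (real n - 1) * (cov x y)\<^sup>2)"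
    unfolding users_def cov_def
    by (intro sum.cong refl expectation_distinct_pairs_iid_centered) (auto simp: expectation_centered)
  also have "\<dots> = 2 * real n * (real n - 1) * (\<Sum>x\<in>{1..k}. \<Sum>y\<in>{1..k}. (cov x y)\<^sup>2)"
    by (simp add: sum_distrib_left)
  also have "\<dots> \<le> 2 * real n * (real n - 1) * (2 * real k)"
    by (rule mult_left_mono[OF sum_cov_sq_le]) (cases n; simp)
  finally show ?thesis
    by simp
qed

lemma expectation_linear_part_sq:
  "measure_pmf.expectation (users n) (\<lambda>B. (linear_part n B)\<^sup>2) \<le>
     5 * real n * (real n - 1)\<^sup>2 * (\<Sum>x\<in>{1..k}. (mean_offset x)\<^sup>2)"
proof -
  let ?v = "\<lambda>b. \<Sum>x\<in>{1..k}. mean_offset x * centered b x"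
  have "measure_pmf.expectation message ?v = 0"
    by (simp add: expectation_centered)
  then have "measure_pmf.expectation (users n) (\<lambda>B. (\<Sum>i<n. ?v (B i))\<^sup>2) =
             real n * measure_pmf.expectation message (\<lambda>b. (?v b)\<^sup>2)"
    unfolding users_def by (intro expectation_sum_iid_centered_sq) auto
  then have "measure_pmf.expectation (users n) (\<lambda>B. (linear_part n B)\<^sup>2) =
             4 * (real n - 1)\<^sup>2 * (real n * measure_pmf.expectation message (\<lambda>b. (?v b)\<^sup>2))"
    by (simp only: linear_part_def power_mult_distrib) simp
  also have "\<dots> \<le> 4 * (real n - 1)\<^sup>2 * (real n * (5/4 * (\<Sum>x\<in>{1..k}. (mean_offset x)\<^sup>2)))"
    by (intro mult_left_mono expectation_weighted_centered_sq) auto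
  finally show ?thesis
    by simp
qed

lemma expectation_rappor_stat_deviation_sq:
  "measure_pmf.expectation (users n)
     (\<lambda>B. (rappor_stat e k n B - real n * (real n - 1) * (\<Sum>x\<in>{1..k}. (mean_offset x)\<^sup>2))\<^sup>2)
   \<le> 8 * real n * (real n - 1) * real k + 10 * real n * (real n - 1)\<^sup>2 * (\<Sum>x\<in>{1..k}. (mean_offset x)\<^sup>2)"
proof -
  have "measure_pmf.expectation (users n)
          (\<lambda>B. (rappor_stat e k n B - real n * (real n - 1) * (\<Sum>x\<in>{1..k}. (mean_offset x)\<^sup>2))\<^sup>2)
        \<le> measure_pmf.expectation (users n) (\<lambda>B. 2 * (pair_part n B)\<^sup>2 + 2 * (linear_part n B)\<^sup>2)"
  proof (rule integral_mono)
    fix B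
    show "(rappor_stat e k n B - real n * (real n - 1) * (\<Sum>x\<in>{1..k}. (mean_offset x)\<^sup>2))\<^sup>2
          \<le> 2 * (pair_part n B)\<^sup>2 + 2 * (linear_part n B)\<^sup>2"
      using zero_le_power2[of "pair_part n B - linear_part n B"]
      by (simp add: rappor_stat_decomposition power2_eq_square algebra_simps)
  qed simp_all
  also have "\<dots> = 2 * measure_pmf.expectation (users n) (\<lambda>B. (pair_part n B)\<^sup>2)
                + 2 * measure_pmf.expectation (users n) (\<lambda>B. (linear_part n B)\<^sup>2)"
    by simp
  finally show ?thesis
    using expectation_pair_part_sq[of n] expectation_linear_part_sq[of n] by simp
qed

lemma sum_mean_offset_sq_uniform:
  assumes "p = uniform_k k"
  shows "(\<Sum>x\<in>{1..k}. (mean_offset x)\<^sup>2) = 0"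
proof (intro sum.neutral ballI)
  fix x assume "x \<in> {1..k}"
  then have "pmf p x = 1 / real k"
    using assms by (auto simp: uniform_k_def)
  then show "(mean_offset x)\<^sup>2 = 0"
    by (simp add: mean_offset_def)
qed

lemma sum_mean_offset_sq_far:
  assumes "\<gamma> < dTV k p (uniform_k k)" "0 \<le> \<gamma>" "1 \<le> k"
  shows "4 * \<alpha>\<^sup>2 * \<gamma>\<^sup>2 / real k \<le> (\<Sum>x\<in>{1..k}. (mean_offset x)\<^sup>2)"
proof -
  have "2 * \<gamma> \<le> (\<Sum>x\<in>{1..k}. \<bar>pmf p x - 1 / real k\<bar>)"
    using assms by (simp add: dTV_def uniform_k_def)
  then have "(2 * \<gamma>)\<^sup>2 \<le> (\<Sum>x\<in>{1..k}. \<bar>pmf p x - 1 / real k\<bar>)\<^sup>2"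
    using assms by (intro power_mono) auto
  also have "\<dots> \<le> (\<Sum>x\<in>{1..k}. (pmf p x - 1 / real k)\<^sup>2) * real k"
    using sum_squared_le_sum_of_squares[of "\<lambda>x. \<bar>pmf p x - 1 / real k\<bar>" "{1..k}"] by simp
  finally have "4 * \<gamma>\<^sup>2 / real k \<le> (\<Sum>x\<in>{1..k}. (pmf p x - 1 / real k)\<^sup>2)"
    using assms by (simp add: divide_le_eq power_mult_distrib)
  then have "\<alpha>\<^sup>2 * (4 * \<gamma>\<^sup>2 / real k) \<le> \<alpha>\<^sup>2 * (\<Sum>x\<in>{1..k}. (pmf p x - 1 / real k)\<^sup>2)"
    by (rule mult_left_mono) simp
  moreover have "(\<Sum>x\<in>{1..k}. (mean_offset x)\<^sup>2) = \<alpha>\<^sup>2 * (\<Sum>x\<in>{1..k}. (pmf p x - 1 / real k)\<^sup>2)"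
    by (simp add: mean_offset_def power_mult_distrib sum_distrib_left)
  ultimately show ?thesis
    by (simp add: mult_ac)
qed

end

section \<open>Error probabilities\<close>

lemma uniform_case_inequality:
  fixes k n Z :: real
  assumes "1 \<le> k" "1 \<le> n" "400 * k ^ 3 \<le> Z\<^sup>2"
  shows "3 * (8 * n * (n - 1) * k) \<le> (n * Z / k)\<^sup>2"
proof -
  have "3 * (8 * n * (n - 1) * k) \<le> 400 * k * n\<^sup>2"
    using assms by (simp add: power2_eq_square algebra_simps)
  also have "400 * k * n\<^sup>2 = (400 * k ^ 3) * n\<^sup>2 / k\<^sup>2"
    using assms by (simp add: power2_eq_square power3_eq_cube)
  also have "\<dots> \<le> Z\<^sup>2 * n\<^sup>2 / k\<^sup>2"
    using assms by (intro divide_right_mono mult_right_mono) auto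
  finally show ?thesis
    by (simp add: power_divide power_mult_distrib mult.commute)
qed

lemma far_case_inequality:
  fixes k n Z S :: real
  assumes k: "1 \<le> k" and n: "1 \<le> n" and Z: "400 * k ^ 3 \<le> Z\<^sup>2" "0 \<le> Z"
    and S: "4 * Z / k \<le> (n - 1) * S"
  shows "3 * (8 * n * (n - 1) * k + 10 * n * (n - 1)\<^sup>2 * S) \<le> (3/4 * (n * (n - 1) * S))\<^sup>2"
proof -
  \<comment> \<open>with \<open>Y = (n - 1) S\<close> the claim reduces to \<open>16 (8 k + 10 Y) \<le> 3 Y\<^sup>2\<close>,
    which follows from \<open>Y \<ge> 80\<close> and \<open>Y\<^sup>2 \<ge> 6400 k\<close>\<close>
  define Y where "Y = (n - 1) * S"
  have "(4 * Z / k)\<^sup>2 \<le> Y\<^sup>2"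
    using S Z k by (intro power_mono) (auto simp: Y_def)
  moreover have "6400 * k \<le> (4 * Z / k)\<^sup>2"
    using Z k by (simp add: power_divide power2_eq_square power3_eq_cube field_simps)
  ultimately have Y2: "6400 * k \<le> Y\<^sup>2"
    by linarith
  have "80\<^sup>2 \<le> Y\<^sup>2"
    using Y2 k by simp
  moreover have "0 \<le> Y"
    using S Z k divide_nonneg_nonneg[of "4 * Z" k] unfolding Y_def by linarith
  ultimately have Y80: "80 \<le> Y"
    by (rule power2_le_imp_le)
  then have "80 * Y \<le> Y\<^sup>2"
    by (simp add: power2_eq_square mult_right_mono)
  with Y2 have "16 * (8 * k + 10 * Y) \<le> 3 * Y\<^sup>2"
    using zero_le_power2[of Y] by argo
  moreover have "n * (n - 1) \<le> n * n"
    using n by (simp add: mult_left_mono)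
  moreover have "0 \<le> 16 * (8 * k + 10 * Y)"
    using k Y80 by simp
  ultimately have "n * (n - 1) * (16 * (8 * k + 10 * Y)) \<le> n * n * (3 * Y\<^sup>2)"
    by (intro mult_mono[of "n * (n - 1)" "n * n"]) simp_all
  then show ?thesis
    by (simp add: Y_def power2_eq_square algebra_simps)
qed

context rappor_model
begin

lemma prob_reject_uniform:
  assumes unif: "p = uniform_k k" and "1 \<le> k" "0 < \<gamma>" "2 \<le> n"
    and large: "400 * real k ^ 3 \<le> ((real n - 1) * \<alpha>\<^sup>2 * \<gamma>\<^sup>2)\<^sup>2"
  shows "measure_pmf.prob (users n) {B. \<not> rappor_test e k n \<gamma> B} \<le> 1/3"
proof -
  define Z where "Z = (real n - 1) * \<alpha>\<^sup>2 * \<gamma>\<^sup>2"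
  define \<tau> where "\<tau> = real n * Z / real k"
  have \<tau>: "real n * (real n - 1) * \<alpha>\<^sup>2 * \<gamma>\<^sup>2 / real k = \<tau>"
    by (simp add: \<tau>_def Z_def mult.assoc)
  have S0: "(\<Sum>x\<in>{1..k}. (mean_offset x)\<^sup>2) = 0"
    by (rule sum_mean_offset_sq_uniform[OF unif])
  have "0 < \<tau>"
    using assms alpha_R_pos[OF e_pos] by (simp add: \<tau>_def Z_def)
  have "measure_pmf.prob (users n) {B. \<not> rappor_test e k n \<gamma> B}
        \<le> measure_pmf.prob (users n) {B. \<tau> \<le> \<bar>rappor_stat e k n B\<bar>}"
    by (intro measure_pmf.finite_measure_mono) (auto simp: rappor_test_def \<tau>)
  also have "\<dots> \<le> measure_pmf.expectation (users n) (\<lambda>B. (rappor_stat e k n B)\<^sup>2) / \<tau>\<^sup>2"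
    using measure_pmf.second_moment_method[of "rappor_stat e k n" "users n", OF _ _ \<open>0 < \<tau>\<close>] by simp
  also have "\<dots> \<le> 8 * real n * (real n - 1) * real k / \<tau>\<^sup>2"
    using expectation_rappor_stat_deviation_sq[of n] S0 by (intro divide_right_mono) simp_all
  also have "\<dots> \<le> 1/3"
  proof -
    have "3 * (8 * real n * (real n - 1) * real k) \<le> \<tau>\<^sup>2"
      using uniform_case_inequality[of k n Z] assms by (simp add: \<tau>_def Z_def)
    then show ?thesis
      using \<open>0 < \<tau>\<close> by (simp add: pos_divide_le_eq)
  qed
  finally show ?thesis .
qed

lemma prob_accept_far:
  assumes far: "\<gamma> < dTV k p (uniform_k k)" and "1 \<le> k" "0 < \<gamma>" "2 \<le> n"
    and large: "400 * real k ^ 3 \<le> ((real n - 1) * \<alpha>\<^sup>2 * \<gamma>\<^sup>2)\<^sup>2"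
  shows "measure_pmf.prob (users n) {B. rappor_test e k n \<gamma> B} \<le> 1/3"
proof -
  define S where "S = (\<Sum>x\<in>{1..k}. (mean_offset x)\<^sup>2)"
  define m where "m = real n * (real n - 1) * S"
  define Z where "Z = (real n - 1) * \<alpha>\<^sup>2 * \<gamma>\<^sup>2"
  have "4 * \<alpha>\<^sup>2 * \<gamma>\<^sup>2 / real k \<le> S"
    unfolding S_def using assms by (intro sum_mean_offset_sq_far) auto
  then have S: "4 * Z / real k \<le> (real n - 1) * S"
    using assms mult_left_mono[of "4 * \<alpha>\<^sup>2 * \<gamma>\<^sup>2 / real k" S "real n - 1"]
    by (simp add: Z_def mult.assoc mult.left_commute)
  have "0 < Z"
    using assms alpha_R_pos[OF e_pos] by (simp add: Z_def)
  define \<tau> where "\<tau> = real n * Z / real k"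
  have \<tau>: "real n * (real n - 1) * \<alpha>\<^sup>2 * \<gamma>\<^sup>2 / real k = \<tau>"
    by (simp add: \<tau>_def Z_def mult.assoc)
  have "4 * \<tau> \<le> m"
    using mult_left_mono[OF S, of "real n"] by (simp add: \<tau>_def m_def mult.assoc mult.left_commute)
  moreover have "0 < \<tau>"
    using assms \<open>0 < Z\<close> by (simp add: \<tau>_def)
  ultimately have "0 < m" and accept: "{B. rappor_test e k n \<gamma> B} \<subseteq> {B. 3/4 * m \<le> \<bar>rappor_stat e k n B - m\<bar>}"
    by (auto simp: rappor_test_def \<tau>)
  have "measure_pmf.prob (users n) {B. rappor_test e k n \<gamma> B}
        \<le> measure_pmf.prob (users n) {B. 3/4 * m \<le> \<bar>rappor_stat e k n B - m\<bar>}"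
    using accept by (intro measure_pmf.finite_measure_mono) auto
  also have "\<dots> \<le> measure_pmf.expectation (users n) (\<lambda>B. (rappor_stat e k n B - m)\<^sup>2) / (3/4 * m)\<^sup>2"
    using measure_pmf.second_moment_method[of "\<lambda>B. rappor_stat e k n B - m" "users n" "3/4 * m"] \<open>0 < m\<close>
    by simp
  also have "\<dots> \<le> (8 * real n * (real n - 1) * real k + 10 * real n * (real n - 1)\<^sup>2 * S) / (3/4 * m)\<^sup>2"
    using expectation_rappor_stat_deviation_sq[of n] by (intro divide_right_mono) (simp_all add: m_def S_def)
  also have "\<dots> \<le> 1/3"
  proof -
    have "3 * (8 * real n * (real n - 1) * real k + 10 * real n * (real n - 1)\<^sup>2 * S) \<le> (3/4 * m)\<^sup>2"
      using far_case_inequality[of k n Z S] assms S \<open>0 < Z\<close> large by (simp add: m_def Z_def)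
    then show ?thesis
      using \<open>0 < m\<close> by (simp add: pos_divide_le_eq)
  qed
  finally show ?thesis .
qed

end

lemma rappor_test_is_uniformity_tester:
  assumes "1 \<le> k" "0 < \<gamma>" "0 < \<epsilon>" "2 \<le> n"
    and "400 * real k ^ 3 \<le> ((real n - 1) * (alpha_R \<epsilon>)\<^sup>2 * \<gamma>\<^sup>2)\<^sup>2"
  shows "is_uniformity_tester k \<gamma> n (rappor \<epsilon> k) (\<lambda>_. False) (rappor_test \<epsilon> k n \<gamma>)"
  unfolding is_uniformity_tester_def Let_def
proof (intro allI impI conjI)
  fix p :: "nat pmf"
  assume "set_pmf p \<subseteq> {1..k}"
  then interpret rappor_model k \<epsilon> p
    by unfold_locales (use assms in auto)
  have users: "Pi_pmf {..<n} (\<lambda>_. False) (\<lambda>_. p \<bind> rappor \<epsilon> k) = users n"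
    by (simp add: users_def message_def)
  have compl: "measure_pmf.prob (users n) {B. rappor_test \<epsilon> k n \<gamma> B} =
               1 - measure_pmf.prob (users n) {B. \<not> rappor_test \<epsilon> k n \<gamma> B}"
    using measure_pmf.prob_compl[of "{B. \<not> rappor_test \<epsilon> k n \<gamma> B}" "users n"]
    by (simp add: set_diff_eq)
  show "2/3 \<le> measure_pmf.prob (Pi_pmf {..<n} (\<lambda>_. False) (\<lambda>_. p \<bind> rappor \<epsilon> k))
                 {B. rappor_test \<epsilon> k n \<gamma> B}" if "p = uniform_k k"
    using prob_reject_uniform[OF that assms(1,2,4,5)] by (simp add: users compl)
  show "2/3 \<le> measure_pmf.prob (Pi_pmf {..<n} (\<lambda>_. False) (\<lambda>_. p \<bind> rappor \<epsilon> k))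
                 {B. \<not> rappor_test \<epsilon> k n \<gamma> B}" if "\<gamma> < dTV k p (uniform_k k)"
    using prob_accept_far[OF that assms(1,2,4,5)] compl by (simp add: users)
qed

lemma rappor_sample_size_sufficient:
  assumes k: "1 \<le> k" and \<gamma>: "0 < \<gamma>" "\<gamma> \<le> 1" and \<epsilon>: "0 < \<epsilon>" "\<epsilon> \<le> 1"
    and n: "1440 * real k powr (3/2) / (\<gamma>\<^sup>2 * \<epsilon>\<^sup>2) \<le> real n"
  shows "2 \<le> n" "400 * real k ^ 3 \<le> ((real n - 1) * (alpha_R \<epsilon>)\<^sup>2 * \<gamma>\<^sup>2)\<^sup>2"
proof -
  define K where "K = real k powr (3/2)"
  define g where "g = \<gamma>\<^sup>2 * \<epsilon>\<^sup>2"
  have K1: "1 \<le> K"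
    using k unfolding K_def by (intro ge_one_powr_ge_zero) auto
  have "K\<^sup>2 = real k powr (3/2 + 3/2)"
    by (simp only: K_def power2_eq_square powr_add)
  then have K2: "K\<^sup>2 = real k ^ 3"
    by simp
  have "0 < g" "g \<le> 1"
    using \<gamma> \<epsilon> by (simp_all add: g_def power_le_one mult_le_one)
  then have ng: "1440 * K \<le> real n * g"
    using n by (simp add: K_def g_def pos_divide_le_eq)
  also have "\<dots> \<le> real n"
    using \<open>g \<le> 1\<close> by (simp add: mult_left_le)
  finally show "2 \<le> n"
    using K1 by simp
  then have "real n * g / 72 \<le> (real n - 1) * g / 36"
    using \<open>0 < g\<close> by (simp add: field_simps)
  also have "\<dots> = (real n - 1) * (\<epsilon> / 6)\<^sup>2 * \<gamma>\<^sup>2"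
    by (simp add: g_def power_divide)
  also have "\<dots> \<le> (real n - 1) * (alpha_R \<epsilon>)\<^sup>2 * \<gamma>\<^sup>2"
    using \<open>2 \<le> n\<close> \<epsilon> alpha_R_lower_bound[OF \<epsilon>]
    by (intro mult_right_mono mult_left_mono power_mono) auto
  finally have "20 * K \<le> (real n - 1) * (alpha_R \<epsilon>)\<^sup>2 * \<gamma>\<^sup>2"
    using ng by simp
  then have "(20 * K)\<^sup>2 \<le> ((real n - 1) * (alpha_R \<epsilon>)\<^sup>2 * \<gamma>\<^sup>2)\<^sup>2"
    using K1 by (intro power_mono) auto
  then show "400 * real k ^ 3 \<le> ((real n - 1) * (alpha_R \<epsilon>)\<^sup>2 * \<gamma>\<^sup>2)\<^sup>2"
    by (simp add: power_mult_distrib K2)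
qed

theorem theorem3p1:
  shows "\<exists>C>0. \<forall>k::nat. \<forall>\<gamma> \<epsilon>::real. \<forall>n::nat.
     k \<ge> 2 \<longrightarrow> 0 < \<gamma> \<longrightarrow> \<gamma> \<le> 1 \<longrightarrow> 0 < \<epsilon> \<longrightarrow> \<epsilon> \<le> 1 \<longrightarrow>
     real n \<ge> C * real k powr (3/2) / (\<gamma>\<^sup>2 * \<epsilon>\<^sup>2) \<longrightarrow>
     is_uniformity_tester k \<gamma> n (rappor \<epsilon> k) (\<lambda>_. False) (rappor_test \<epsilon> k n \<gamma>)"
proof (intro exI[of _ 1440] conjI allI impI)
  fix k :: nat and \<gamma> \<epsilon> :: real and n :: nat
  assume "2 \<le> k" "0 < \<gamma>" "\<gamma> \<le> 1" "0 < \<epsilon>" "\<epsilon> \<le> 1"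
    and "1440 * real k powr (3/2) / (\<gamma>\<^sup>2 * \<epsilon>\<^sup>2) \<le> real n"
  moreover from this have "1 \<le> k"
    by simp
  ultimately show "is_uniformity_tester k \<gamma> n (rappor \<epsilon> k) (\<lambda>_. False) (rappor_test \<epsilon> k n \<gamma>)"
    using rappor_sample_size_sufficient rappor_test_is_uniformity_tester by blast
qed simp

end
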